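(* Assume the standing assumptions and let $\rho,\kappa>0$. Then $\theta_{\rho,\kappa}$ has a unique minimizer $p_{DS}^*$ on $\mathbb{R}^m$, and if $p^*$ is any minimizer of $\theta$ on $\mathbb{R}^m$ (i.e. an optimal solution of $(D)$), then $$\|p_{DS}^*\|^2\le \|p^*\|^2+\frac{2\rho}{\kappa}D_f .$$ In particular, if $\|p^*\|\le R$ for some $R>0$, $D_f>0$, and $\rho=\frac{\epsilon}{3D_f}$, $\kappa=\frac{2\epsilon}{3R^2}$ for some $\epsilon>0$, then $\|p_{DS}^*\|\le\sqrt2\,R$.
   Context: Standing assumptions: $\mathcal{H}$ is a real Hilbert space; $f:\mathcal{H}\to\mathbb{R}\cup\{+\infty\}$ is proper, convex, lower semicontinuous with bounded effective domain; $g:\mathbb{R}^m\to\mathbb{R}\cup\{+\infty\}$ is proper, lower semicontinuous and $\mu$-strongly convex for some $\mu>0$; $A:\mathcal{H}\to\mathbb{R}^m$ is linear and continuous with $A(\operatorname{dom} f)\cap\operatorname{dom} g\neq\emptyset$. $D_f:=\sup\{\tfrac12\|x\|^2:x\in\operatorname{dom} f\}$. $\theta(p):=f^*(A^*p)+g^*(-p)$ (Fenchel conjugates, $A^*$ adjoint). For $\rho>0$, $f_\rho^*(q):=\sup_{x\in\mathcal{H}}\{\langle q,x\rangle-f(x)-\frac\rho2\|x\|^2\}$, $\theta_\rho(p):=f_\rho^*(A^*p)+g^*(-p)$ and $\theta_{\rho,\kappa}(p):=\theta_\rho(p)+\frac\kappa2\|p\|^2$. *)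

theory Defs
  imports "HOL-Analysis.Analysis"
begin

text \<open>Extended-valued functions into \<real> \<union> {+\<infinity>} are modelled as functions into ereal;
  properness excludes the value -\<infinity>.\<close>

definition proper_fun :: "('a \<Rightarrow> ereal) \<Rightarrow> bool" where
  "proper_fun f \<longleftrightarrow> (\<forall>x. f x \<noteq> -\<infinity>) \<and> (\<exists>x. f x \<noteq> \<infinity>)"

definition edom :: "('a \<Rightarrow> ereal) \<Rightarrow> 'a set" where
  "edom f = {x. f x < \<infinity>}"

definition convex_efun :: "('a::real_vector \<Rightarrow> ereal) \<Rightarrow> bool" where
  "convex_efun f \<longleftrightarrow> (\<forall>x y t. 0 \<le> t \<and> t \<le> 1 \<longrightarrow>
     f (t *\<^sub>R x + (1 - t) *\<^sub>R y) \<le> ereal t * f x + ereal (1 - t) * f y)"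

definition lsc_efun :: "('a::topological_space \<Rightarrow> ereal) \<Rightarrow> bool" where
  "lsc_efun f \<longleftrightarrow> (\<forall>x. f x \<le> Liminf (at x) f)"

definition strongly_convex_efun :: "real \<Rightarrow> ('a::real_normed_vector \<Rightarrow> ereal) \<Rightarrow> bool" where
  "strongly_convex_efun \<mu> g \<longleftrightarrow> convex_efun (\<lambda>x. g x - ereal (\<mu> / 2 * (norm x)\<^sup>2))"

definition fconj :: "('a::real_inner \<Rightarrow> ereal) \<Rightarrow> 'a \<Rightarrow> ereal" where
  "fconj f y = (SUP x. ereal (y \<bullet> x) - f x)"

definition Dconst :: "('a::real_normed_vector \<Rightarrow> ereal) \<Rightarrow> real" where
  "Dconst f = (SUP x\<in>edom f. (norm x)\<^sup>2 / 2)"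

text \<open>f^*(A^* p) written out: \<langle>A^* p, x\<rangle> = \<langle>p, A x\<rangle>\<close>
definition theta :: "('a::real_inner \<Rightarrow> ereal) \<Rightarrow> ('b::real_inner \<Rightarrow> ereal) \<Rightarrow> ('a \<Rightarrow> 'b) \<Rightarrow> 'b \<Rightarrow> ereal" where
  "theta f g A p = (SUP x. ereal (p \<bullet> A x) - f x) + fconj g (- p)"

definition theta_rho :: "real \<Rightarrow> ('a::real_inner \<Rightarrow> ereal) \<Rightarrow> ('b::real_inner \<Rightarrow> ereal) \<Rightarrow> ('a \<Rightarrow> 'b) \<Rightarrow> 'b \<Rightarrow> ereal" where
  "theta_rho \<rho> f g A p = (SUP x. ereal (p \<bullet> A x) - f x - ereal (\<rho> / 2 * (norm x)\<^sup>2)) + fconj g (- p)"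

definition theta_rho_kappa :: "real \<Rightarrow> real \<Rightarrow> ('a::real_inner \<Rightarrow> ereal) \<Rightarrow> ('b::real_inner \<Rightarrow> ereal) \<Rightarrow> ('a \<Rightarrow> 'b) \<Rightarrow> 'b \<Rightarrow> ereal" where
  "theta_rho_kappa \<rho> \<kappa> f g A p = theta_rho \<rho> f g A p + ereal (\<kappa> / 2 * (norm p)\<^sup>2)"

definition is_minimizer :: "('b \<Rightarrow> ereal) \<Rightarrow> 'b \<Rightarrow> bool" where
  "is_minimizer h p \<longleftrightarrow> (\<forall>q. h p \<le> h q)"

end

theory Submission
  imports Defs
begin

text \<open>
  The regularized dual objective
  \<open>\<theta>\<^sub>\<rho>\<^sub>,\<^sub>\<kappa>(p) = f\<^sub>\<rho>\<^sup>*(A\<^sup>* p) + g\<^sup>*(-p) + \<kappa>/2 \<parallel>p\<parallel>\<^sup>2\<close> is a supremum, over pairs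
  \<open>(x, y) \<in> dom f \<times> dom g\<close>, of the affine functions \<open>p \<mapsto> \<langle>p, A x - y\<rangle> - f x - \<rho>/2 \<parallel>x\<parallel>\<^sup>2 - g y\<close>,
  plus \<open>\<kappa>/2 \<parallel>p\<parallel>\<^sup>2\<close>.  Any such regularized supremum of affine functions on a Euclidean
  space that is finite somewhere has exactly one minimizer: minimizing sequences are bounded
  by the quadratic term, sublevel sets are closed, and the quadratic term makes the function
  strictly convex.  Finiteness at \<open>p = 0\<close> needs \<open>f\<close> and \<open>g\<close> to be bounded below; this is
  where completeness enters: nested nonempty closed convex bounded sets in a Hilbert space have
  a common point, which gives lower bounds for convex lsc functions with bounded domain and,
  together with strong convexity, for \<open>g\<close>.
  Finally \<open>\<theta>\<^sub>\<rho> \<le> \<theta> \<le> \<theta>\<^sub>\<rho> + \<rho> D\<^sub>f\<close>, and comparing the optimality of \<open>p\<^sup>*\<close> for \<open>\<theta>\<close> with that of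
  \<open>p\<^sub>D\<^sub>S\<close> for \<open>\<theta>\<^sub>\<rho>\<^sub>,\<^sub>\<kappa>\<close> gives \<open>\<kappa>/2 \<parallel>p\<^sub>D\<^sub>S\<parallel>\<^sup>2 \<le> \<kappa>/2 \<parallel>p\<^sup>*\<parallel>\<^sup>2 + \<rho> D\<^sub>f\<close>.
\<close>

lemma norm_diff_midpoint:
  fixes x y :: "'a::real_inner"
  shows "(norm (x - y))\<^sup>2 = 2 * (norm x)\<^sup>2 + 2 * (norm y)\<^sup>2 - 4 * (norm (midpoint x y))\<^sup>2"
  unfolding midpoint_def power2_norm_eq_inner
  by (simp add: inner_add_left inner_add_right inner_diff_left inner_diff_right inner_commute
      algebra_simps)

lemma almost_minimal_norm:
  fixes S :: "'a::real_normed_vector set"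
  assumes ne: "S \<noteq> {}" and eps: "0 < \<epsilon>"
  shows "\<exists>x\<in>S. (norm x)\<^sup>2 \<le> (Inf (norm ` S))\<^sup>2 + \<epsilon>"
proof -
  have "0 \<le> Inf (norm ` S)" using ne by (intro cInf_greatest) auto
  then have "Inf (norm ` S) < sqrt ((Inf (norm ` S))\<^sup>2 + \<epsilon>)"
    using eps by (intro real_less_rsqrt) auto
  then obtain x where x: "x \<in> S" "norm x < sqrt ((Inf (norm ` S))\<^sup>2 + \<epsilon>)"
    using cInf_lessD[of "norm ` S"] ne by auto
  then have "(norm x)\<^sup>2 < (sqrt ((Inf (norm ` S))\<^sup>2 + \<epsilon>))\<^sup>2"
    by (intro power_strict_mono) auto
  with eps have "(norm x)\<^sup>2 < (Inf (norm ` S))\<^sup>2 + \<epsilon>" by simp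
  with x show ?thesis by (auto intro: less_imp_le)
qed

lemma Cauchy_if_sq_dist_le:
  fixes x :: "nat \<Rightarrow> 'a::real_normed_vector"
  assumes close: "\<And>n m. n \<le> m \<Longrightarrow> (norm (x n - x m))\<^sup>2 \<le> e n" and lim: "e \<longlonglongrightarrow> 0"
  shows "Cauchy x"
proof (rule CauchyI)
  fix r :: real assume r: "0 < r"
  from lim have "\<forall>\<^sub>F n in sequentially. e n < r\<^sup>2" using r by (auto simp: order_tendsto_iff)
  then obtain M where M: "\<And>n. n \<ge> M \<Longrightarrow> e n < r\<^sup>2" by (auto simp: eventually_sequentially)
  have "norm (x m - x n) < r" if "m \<ge> M" "n \<ge> M" for m n
  proof -
    have "(norm (x m - x n))\<^sup>2 < r\<^sup>2"
    proof (cases "m \<le> n")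
      case True
      then show ?thesis using close[of m n] M[of m] that by linarith
    next
      case False
      then show ?thesis using close[of n m] M[of n] that by (simp add: norm_minus_commute)
    qed
    thus ?thesis using r by (simp add: power_less_imp_less_base)
  qed
  thus "\<exists>M. \<forall>m\<ge>M. \<forall>n\<ge>M. norm (x m - x n) < r" by blast
qed

text \<open>Points \<open>x n \<in> L n\<close> of almost minimal norm form a Cauchy sequence, because the midpoint of
  \<open>x n\<close> and \<open>x m\<close> (for \<open>n \<le> m\<close>) lies in \<open>L n\<close> and the parallelogram law applies.\<close>
lemma nested_midpoint_convex_Inter_nonempty:
  fixes L :: "nat \<Rightarrow> 'a::{real_inner,complete_space} set"
  assumes ne: "\<And>n. L n \<noteq> {}" and dec: "decseq L" and cl: "\<And>n. closed (L n)"
    and mid: "\<And>n x y. x \<in> L n \<Longrightarrow> y \<in> L n \<Longrightarrow> midpoint x y \<in> L n"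
    and bnd: "bounded (L 0)"
  shows "\<exists>z. \<forall>n. z \<in> L n"
proof -
  have sub: "n \<le> m \<Longrightarrow> L m \<subseteq> L n" for n m using dec unfolding decseq_def by blast
  obtain B where B: "\<And>x n. x \<in> L n \<Longrightarrow> norm x \<le> B"
    using bnd sub unfolding bounded_iff by blast
  define \<delta> where "\<delta> n = Inf (norm ` L n)" for n
  have bb: "bdd_below (norm ` L n)" for n by (rule bdd_belowI[of _ 0]) auto
  have \<delta>le: "x \<in> L n \<Longrightarrow> \<delta> n \<le> norm x" for x n
    unfolding \<delta>_def by (rule cInf_lower) (use bb in auto)
  have \<delta>0: "0 \<le> \<delta> n" for n
    unfolding \<delta>_def using ne by (intro cInf_greatest) auto
  have \<delta>mono: "incseq \<delta>"
    unfolding incseq_def \<delta>_def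
    by (intro allI impI cInf_superset_mono image_mono sub) (simp_all add: ne bb)
  have bda: "bdd_above (range \<delta>)"
    using ne \<delta>le B by (intro bdd_aboveI[of _ B]) (fastforce intro: order_trans)
  define \<Delta> where "\<Delta> = Sup (range \<delta>)"
  have \<delta>lim: "\<delta> \<longlonglongrightarrow> \<Delta>" unfolding \<Delta>_def using bda \<delta>mono by (rule LIMSEQ_incseq_SUP)
  have \<delta>\<Delta>: "\<delta> n \<le> \<Delta>" for n unfolding \<Delta>_def using bda by (intro cSUP_upper) auto
  have "\<exists>x\<in>L n. (norm x)\<^sup>2 \<le> (\<delta> n)\<^sup>2 + 1 / (real n + 1)" for n
    unfolding \<delta>_def by (rule almost_minimal_norm[OF ne]) simp
  then obtain x where x: "\<And>n. x n \<in> L n" "\<And>n. (norm (x n))\<^sup>2 \<le> (\<delta> n)\<^sup>2 + 1 / (real n + 1)"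
    by metis
  define e where "e n = 2 * (\<Delta>\<^sup>2 - (\<delta> n)\<^sup>2) + 4 / (real n + 1)" for n
  have close: "(norm (x n - x m))\<^sup>2 \<le> e n" if "n \<le> m" for n m
  proof -
    have "\<delta> n \<le> norm (midpoint (x n) (x m))"
      using sub[OF that] x(1) by (intro \<delta>le mid) auto
    hence "(\<delta> n)\<^sup>2 \<le> (norm (midpoint (x n) (x m)))\<^sup>2" using \<delta>0[of n] by (intro power_mono) auto
    moreover have "(\<delta> m)\<^sup>2 \<le> \<Delta>\<^sup>2" using \<delta>0[of m] \<delta>\<Delta>[of m] by (intro power_mono) auto
    moreover have "1 / (real m + 1) \<le> 1 / (real n + 1)" using that by (intro divide_left_mono) auto
    moreover have "4 / (real n + 1) = 4 * (1 / (real n + 1))" by simp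
    ultimately show ?thesis
      using norm_diff_midpoint[of "x n" "x m"] x(2)[of n] x(2)[of m] unfolding e_def by argo
  qed
  have "e \<longlonglongrightarrow> 2 * (\<Delta>\<^sup>2 - \<Delta>\<^sup>2) + 4 * 0"
    unfolding e_def divide_inverse using LIMSEQ_inverse_real_of_nat
    by (intro tendsto_intros \<delta>lim) (simp add: add.commute)
  then have "Cauchy x" by (intro Cauchy_if_sq_dist_le[OF close]) simp_all
  then obtain z where z: "x \<longlonglongrightarrow> z" using Cauchy_convergent convergent_def by blast
  have "z \<in> L k" for k
  proof (rule Lim_in_closed_set[OF cl _ _ z])
    show "\<forall>\<^sub>F n in sequentially. x n \<in> L k"
      unfolding eventually_sequentially using x(1) sub by blast
  qed auto
  thus ?thesis by blast
qed

lemma lsc_closed_sublevel: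
  fixes f :: "'a::topological_space \<Rightarrow> ereal"
  assumes "lsc_efun f"
  shows "closed {x. f x \<le> ereal c}"
proof -
  have "open {x. ereal c < f x}"
  proof (subst open_subopen, intro ballI)
    fix z assume "z \<in> {x. ereal c < f x}"
    hence zc: "ereal c < f z" by simp
    also have "f z \<le> Liminf (at z) f" using assms unfolding lsc_efun_def by blast
    finally have "\<forall>\<^sub>F x in at z. ereal c < f x" by (rule less_LiminfD)
    then obtain S where S: "open S" "z \<in> S" "\<forall>x\<in>S. x \<noteq> z \<longrightarrow> ereal c < f x"
      unfolding eventually_at_topological by auto
    show "\<exists>T. open T \<and> z \<in> T \<and> T \<subseteq> {x. ereal c < f x}"
      using S zc by (intro exI[of _ S]) auto
  qed
  moreover have "{x. f x \<le> ereal c} = - {x. ereal c < f x}" by (auto simp: not_less)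
  ultimately show ?thesis by (simp add: closed_def)
qed

text \<open>A function on a Hilbert space whose sublevel sets are closed and closed under midpoints
  is bounded below as soon as its effective domain is bounded: otherwise the sublevel sets
  at levels \<open>-n\<close> would have a common point, where the function would be \<open>-\<infinity>\<close>.\<close>
lemma bdd_below_if_midpoint_convex_sublevels:
  fixes h :: "'a::{real_inner,complete_space} \<Rightarrow> ereal"
  assumes nm: "\<And>x. h x \<noteq> -\<infinity>" and cl: "\<And>c. closed {x. h x \<le> ereal c}"
    and mid: "\<And>x y c. h x \<le> ereal c \<Longrightarrow> h y \<le> ereal c \<Longrightarrow> h (midpoint x y) \<le> ereal c"
    and bnd: "bounded (edom h)"
  shows "\<exists>b. \<forall>x. ereal b \<le> h x"
proof (rule ccontr)
  assume unbdd: "\<not> ?thesis"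
  define L where "L n = {x. h x \<le> ereal (- real n)}" for n
  have "\<exists>z. \<forall>n. z \<in> L n"
  proof (rule nested_midpoint_convex_Inter_nonempty)
    show "L n \<noteq> {}" for n
    proof -
      from unbdd obtain x where "h x < ereal (- real n)" by (auto simp: not_le)
      then show ?thesis unfolding L_def by (auto intro: less_imp_le)
    qed
    show "decseq L" unfolding decseq_def L_def by (auto elim: order_trans)
    show "bounded (L 0)"
      by (rule bounded_subset[OF bnd]) (auto simp: L_def edom_def)
  qed (use cl mid in \<open>auto simp: L_def\<close>)
  then obtain z where z: "\<And>n. h z \<le> ereal (- real n)" unfolding L_def by blast
  then obtain r where r: "h z = ereal r" using nm[of z] by (cases "h z") (auto dest: spec[of _ 0])
  obtain n :: nat where "- r < real n" using reals_Archimedean2 by blast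
  with z[of n] r show False by simp
qed

lemma convex_efun_midpoint_le:
  fixes f :: "'a::real_vector \<Rightarrow> ereal"
  assumes "convex_efun f" and "f x \<le> ereal c" and "f y \<le> ereal c"
  shows "f (midpoint x y) \<le> ereal c"
proof -
  have "f (midpoint x y) \<le> ereal (1/2) * f x + ereal (1 - 1/2) * f y"
    using assms(1)[unfolded convex_efun_def, rule_format, of "1/2" x y]
    by (simp add: midpoint_def scaleR_right_distrib)
  also have "\<dots> \<le> ereal (1/2) * ereal c + ereal (1 - 1/2) * ereal c"
    by (intro add_mono ereal_mult_left_mono assms(2,3)) auto
  finally show ?thesis by simp
qed

lemma convex_lsc_bdd_below:
  fixes f :: "'a::{real_inner,complete_space} \<Rightarrow> ereal"
  assumes "proper_fun f" and "convex_efun f" and "lsc_efun f" and "bounded (edom f)"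
  shows "\<exists>b. \<forall>x. ereal b \<le> f x"
proof (rule bdd_below_if_midpoint_convex_sublevels)
  show "f x \<noteq> -\<infinity>" for x using assms(1) unfolding proper_fun_def by blast
  show "closed {x. f x \<le> ereal c}" for c using assms(3) by (rule lsc_closed_sublevel)
  show "f (midpoint x y) \<le> ereal c" if "f x \<le> ereal c" "f y \<le> ereal c" for x y c
    using assms(2) that by (rule convex_efun_midpoint_le)
qed (fact assms(4))

lemma norm_convex_comb_sq:
  fixes y w :: "'a::real_inner"
  shows "(norm (t *\<^sub>R y + (1 - t) *\<^sub>R w))\<^sup>2
    = t * (norm y)\<^sup>2 + (1 - t) * (norm w)\<^sup>2 - t * (1 - t) * (norm (y - w))\<^sup>2"
  unfolding power2_norm_eq_inner
  by (simp add: inner_add_left inner_add_right inner_diff_left inner_diff_right inner_commute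
      algebra_simps)

lemma strongly_convex_efun_ineq:
  fixes g :: "'a::real_inner \<Rightarrow> ereal"
  assumes sc: "strongly_convex_efun \<mu> g" and nm: "\<And>x. g x \<noteq> -\<infinity>"
    and gy: "g y = ereal a" and gw: "g w = ereal b" and t: "0 \<le> t" "t \<le> 1"
  shows "\<exists>c. g (t *\<^sub>R y + (1 - t) *\<^sub>R w) = ereal c \<and>
           c \<le> t * a + (1 - t) * b - \<mu>/2 * t * (1 - t) * (norm (y - w))\<^sup>2"
proof -
  define z where "z = t *\<^sub>R y + (1 - t) *\<^sub>R w"
  have "g z - ereal (\<mu>/2 * (norm z)\<^sup>2)
      \<le> ereal t * (g y - ereal (\<mu>/2 * (norm y)\<^sup>2)) + ereal (1 - t) * (g w - ereal (\<mu>/2 * (norm w)\<^sup>2))"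
    using sc t unfolding strongly_convex_efun_def convex_efun_def z_def by blast
  hence le: "g z - ereal (\<mu>/2 * (norm z)\<^sup>2)
      \<le> ereal (t * (a - \<mu>/2 * (norm y)\<^sup>2) + (1 - t) * (b - \<mu>/2 * (norm w)\<^sup>2))"
    by (simp add: gy gw)
  then obtain c where gz: "g z = ereal c" using nm[of z] by (cases "g z") auto
  have "c \<le> t * (a - \<mu>/2 * (norm y)\<^sup>2) + (1 - t) * (b - \<mu>/2 * (norm w)\<^sup>2) + \<mu>/2 * (norm z)\<^sup>2"
    using le by (simp add: gz)
  also have "\<dots> = t * a + (1 - t) * b - \<mu>/2 * t * (1 - t) * (norm (y - w))\<^sup>2"
    unfolding z_def norm_convex_comb_sq by (simp add: field_simps)
  finally have "c \<le> t * a + (1 - t) * b - \<mu>/2 * t * (1 - t) * (norm (y - w))\<^sup>2" .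
  thus ?thesis using gz unfolding z_def by blast
qed

lemma strongly_convex_efun_midpoint_le:
  fixes g :: "'a::real_inner \<Rightarrow> ereal"
  assumes sc: "strongly_convex_efun \<mu> g" and mu: "0 \<le> \<mu>" and nm: "\<And>x. g x \<noteq> -\<infinity>"
    and gx: "g x \<le> ereal c" and gy: "g y \<le> ereal c"
  shows "g (midpoint x y) \<le> ereal c"
proof -
  obtain a b where a: "g x = ereal a" and b: "g y = ereal b"
    using gx gy nm[of x] nm[of y] by (cases "g x"; cases "g y") auto
  obtain d where d: "g ((1/2) *\<^sub>R x + (1 - 1/2) *\<^sub>R y) = ereal d"
    "d \<le> 1/2 * a + (1 - 1/2) * b - \<mu>/2 * (1/2) * (1 - 1/2) * (norm (x - y))\<^sup>2"
    using strongly_convex_efun_ineq[OF sc nm a b, of "1/2"] by auto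
  have "0 \<le> \<mu>/2 * (1/2) * (1 - 1/2) * (norm (x - y))\<^sup>2" using mu by simp
  with d(2) gx gy a b have "d \<le> c" by simp
  with d(1) show ?thesis by (simp add: midpoint_def scaleR_right_distrib)
qed

lemma mult_le_half_square:
  fixes \<kappa> C s :: real
  assumes "\<kappa> > 0"
  shows "C * s \<le> \<kappa>/2 * s\<^sup>2 + C\<^sup>2 / (2 * \<kappa>)"
proof -
  have "0 \<le> (\<kappa> * s - C)\<^sup>2 / (2 * \<kappa>)" using assms by simp
  also have "\<dots> = \<kappa>/2 * s\<^sup>2 - C * s + C\<^sup>2 / (2 * \<kappa>)"
    using assms by (simp add: field_simps power2_eq_square)
  finally show ?thesis by simp
qed

text \<open>A lower semicontinuous strongly convex function is bounded below on every unit ball,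
  since its restriction to the ball has bounded domain and closed, midpoint-convex sublevel sets.\<close>
lemma strongly_convex_bdd_below_on_ball:
  fixes g :: "'a::{real_inner,complete_space} \<Rightarrow> ereal"
  assumes nm: "\<And>x. g x \<noteq> -\<infinity>" and gl: "lsc_efun g" and mu: "0 \<le> \<mu>"
    and sc: "strongly_convex_efun \<mu> g"
  shows "\<exists>m. \<forall>y. dist y0 y \<le> 1 \<longrightarrow> ereal m \<le> g y"
proof -
  define g' where "g' y = (if y \<in> cball y0 1 then g y else \<infinity>)" for y
  have "\<exists>m. \<forall>y. ereal m \<le> g' y"
  proof (rule bdd_below_if_midpoint_convex_sublevels)
    show "g' x \<noteq> -\<infinity>" for x unfolding g'_def using nm by auto
    show "closed {x. g' x \<le> ereal c}" for c
    proof -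
      have "{x. g' x \<le> ereal c} = cball y0 1 \<inter> {x. g x \<le> ereal c}" unfolding g'_def by auto
      thus ?thesis using lsc_closed_sublevel[OF gl] by auto
    qed
    show "g' (midpoint x y) \<le> ereal c" if "g' x \<le> ereal c" "g' y \<le> ereal c" for x y c
      using that strongly_convex_efun_midpoint_le[OF sc mu nm, of x c y]
        convexD[OF convex_cball, of x y0 1 y "1/2" "1/2"]
      unfolding g'_def by (auto simp: midpoint_def scaleR_right_distrib split: if_splits)
    show "bounded (edom g')"
      by (rule bounded_subset[of "cball y0 1"]) (auto simp: edom_def g'_def split: if_splits)
  qed
  then show ?thesis unfolding g'_def by (metis mem_cball)
qed

text \<open>Quadratic growth away from a ball: if \<open>g \<ge> m\<^sub>1\<close> on the unit ball around \<open>y\<^sub>0\<close> and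
  \<open>g(y\<^sub>0) = g\<^sub>0\<close>, then strong convexity along the segment from \<open>y\<^sub>0\<close> to a far point \<open>y\<close>, evaluated
  where it leaves the ball, gives \<open>g(y) \<ge> m\<^sub>1 - (g\<^sub>0 - m\<^sub>1)\<^sup>2/(2\<mu>)\<close>.\<close>
lemma strongly_convex_lower_bound_from_ball:
  fixes g :: "'a::real_inner \<Rightarrow> ereal"
  assumes sc: "strongly_convex_efun \<mu> g" and mu: "\<mu> > 0" and nm: "\<And>x. g x \<noteq> -\<infinity>"
    and g0: "g y0 = ereal g0" and ball: "\<And>y. dist y0 y \<le> 1 \<Longrightarrow> ereal m1 \<le> g y"
  shows "ereal (m1 - (g0 - m1)\<^sup>2 / (2 * \<mu>)) \<le> g y"
proof -
  have m1: "m1 \<le> a" if "g y = ereal a" "dist y0 y \<le> 1" for y a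
    using ball[of y] that by simp
  have "m1 - (g0 - m1)\<^sup>2 / (2 * \<mu>) \<le> a" if ga: "g y = ereal a" for a
  proof (cases "dist y0 y \<le> 1")
    case True
    moreover have "0 \<le> (g0 - m1)\<^sup>2 / (2 * \<mu>)" using mu by simp
    ultimately show ?thesis using m1[OF ga] by linarith
  next
    case False
    define r where "r = dist y0 y"
    have r1: "1 < r" using False r_def by simp
    define t where "t = 1 / r"
    have t: "0 \<le> t" "t \<le> 1" using r1 unfolding t_def by auto
    obtain c where c: "g (t *\<^sub>R y + (1 - t) *\<^sub>R y0) = ereal c"
      "c \<le> t * a + (1 - t) * g0 - \<mu>/2 * t * (1 - t) * r\<^sup>2"
      using strongly_convex_efun_ineq[OF sc nm ga g0 t] by (auto simp: r_def dist_norm norm_minus_commute)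
    have "dist y0 (t *\<^sub>R y + (1 - t) *\<^sub>R y0) = t * r"
      using t(1) by (simp add: r_def dist_norm algebra_simps flip: scaleR_diff_right)
    also have "\<dots> = 1" using r1 by (simp add: t_def)
    finally have "m1 \<le> c" using m1[OF c(1)] by simp
    with c(2) have "r * m1 \<le> r * (t * a + (1 - t) * g0 - \<mu>/2 * t * (1 - t) * r\<^sup>2)"
      using r1 by simp
    also have "\<dots> = a + (r - 1) * g0 - \<mu>/2 * (r - 1) * r"
      using r1 by (simp add: t_def field_simps power2_eq_square)
    finally have ineq: "m1 - (g0 - m1) * (r - 1) + \<mu>/2 * (r - 1) * r \<le> a"
      by (simp add: algebra_simps)
    have "(g0 - m1) * (r - 1) \<le> \<mu>/2 * (r - 1)\<^sup>2 + (g0 - m1)\<^sup>2 / (2 * \<mu>)"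
      by (rule mult_le_half_square[OF mu])
    moreover have "\<mu>/2 * (r - 1)\<^sup>2 \<le> \<mu>/2 * (r - 1) * r"
      using r1 mu by (simp add: power2_eq_square)
    ultimately show ?thesis using ineq by linarith
  qed
  then show ?thesis using nm[of y] by (cases "g y") auto
qed

lemma strongly_convex_bdd_below:
  fixes g :: "'a::{real_inner,complete_space} \<Rightarrow> ereal"
  assumes gp: "proper_fun g" and gl: "lsc_efun g" and mu: "\<mu> > 0"
    and sc: "strongly_convex_efun \<mu> g"
  shows "\<exists>b. \<forall>y. ereal b \<le> g y"
proof -
  have nm: "\<And>x. g x \<noteq> -\<infinity>" using gp unfolding proper_fun_def by blast
  obtain y0 g0 where g0: "g y0 = ereal g0"
    using gp nm unfolding proper_fun_def by (metis ereal_cases)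
  obtain m1 where "\<And>y. dist y0 y \<le> 1 \<Longrightarrow> ereal m1 \<le> g y"
    using strongly_convex_bdd_below_on_ball[OF nm gl less_imp_le[OF mu] sc] by blast
  then show ?thesis using strongly_convex_lower_bound_from_ball[OF sc mu nm g0] by blast
qed

text \<open>The regularized dual objective has exactly this shape.\<close>
definition regularized_affine_sup ::
    "'i set \<Rightarrow> ('i \<Rightarrow> real) \<Rightarrow> ('i \<Rightarrow> 'a::real_inner) \<Rightarrow> real \<Rightarrow> 'a \<Rightarrow> ereal" where
  "regularized_affine_sup I c v \<kappa> p = (SUP i\<in>I. ereal (c i + p \<bullet> v i)) + ereal (\<kappa>/2 * (norm p)\<^sup>2)"

lemma regularized_affine_sup_le_iff:
  "regularized_affine_sup I c v \<kappa> p \<le> ereal r \<longleftrightarrow>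
     (\<forall>i\<in>I. c i + p \<bullet> v i + \<kappa>/2 * (norm p)\<^sup>2 \<le> r)"
proof -
  let ?S = "SUP i\<in>I. ereal (c i + p \<bullet> v i)"
  have "?S + ereal (\<kappa>/2 * (norm p)\<^sup>2) \<le> ereal r \<longleftrightarrow> ?S \<le> ereal (r - \<kappa>/2 * (norm p)\<^sup>2)"
    by (cases ?S) auto
  then show ?thesis unfolding regularized_affine_sup_def by (auto simp: SUP_le_iff algebra_simps)
qed

lemma regularized_affine_sup_lower:
  assumes "i \<in> I"
  shows "ereal (c i + p \<bullet> v i + \<kappa>/2 * (norm p)\<^sup>2) \<le> regularized_affine_sup I c v \<kappa> p"
proof -
  have "ereal (c i + p \<bullet> v i) \<le> (SUP i\<in>I. ereal (c i + p \<bullet> v i))"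
    using assms by (rule SUP_upper)
  then have "ereal (c i + p \<bullet> v i) + ereal (\<kappa>/2 * (norm p)\<^sup>2)
      \<le> (SUP i\<in>I. ereal (c i + p \<bullet> v i)) + ereal (\<kappa>/2 * (norm p)\<^sup>2)"
    by (rule add_right_mono)
  then show ?thesis unfolding regularized_affine_sup_def by simp
qed

lemma regularized_affine_sup_midpoint:
  assumes "regularized_affine_sup I c v \<kappa> p \<le> ereal r"
    and "regularized_affine_sup I c v \<kappa> q \<le> ereal r"
  shows "regularized_affine_sup I c v \<kappa> (midpoint p q) \<le> ereal (r - \<kappa>/8 * (norm (p - q))\<^sup>2)"
  unfolding regularized_affine_sup_le_iff
proof
  fix i assume i: "i \<in> I"
  have bounds: "c i + p \<bullet> v i + \<kappa>/2 * (norm p)\<^sup>2 \<le> r" "c i + q \<bullet> v i + \<kappa>/2 * (norm q)\<^sup>2 \<le> r"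
    using assms i unfolding regularized_affine_sup_le_iff by auto
  have mid_inner: "midpoint p q \<bullet> v i = (p \<bullet> v i + q \<bullet> v i) / 2"
    by (simp add: midpoint_def inner_add_left)
  have mid_norm: "(norm (midpoint p q))\<^sup>2 = (2 * (norm p)\<^sup>2 + 2 * (norm q)\<^sup>2 - (norm (p - q))\<^sup>2) / 4"
    using norm_diff_midpoint[of p q] by simp
  have "c i + midpoint p q \<bullet> v i + \<kappa>/2 * (norm (midpoint p q))\<^sup>2
      = ((c i + p \<bullet> v i + \<kappa>/2 * (norm p)\<^sup>2) + (c i + q \<bullet> v i + \<kappa>/2 * (norm q)\<^sup>2)) / 2
        - \<kappa>/8 * (norm (p - q))\<^sup>2"
    unfolding mid_inner mid_norm by (simp add: field_simps)
  also have "\<dots> \<le> (r + r) / 2 - \<kappa>/8 * (norm (p - q))\<^sup>2"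
    using bounds by (intro diff_right_mono divide_right_mono add_mono) auto
  finally show "c i + midpoint p q \<bullet> v i + \<kappa>/2 * (norm (midpoint p q))\<^sup>2
      \<le> r - \<kappa>/8 * (norm (p - q))\<^sup>2"
    by simp
qed

lemma regularized_affine_sup_coercive:
  assumes i0: "i0 \<in> I" and kappa: "\<kappa> > 0"
  shows "ereal (c i0 - (norm (v i0))\<^sup>2 / \<kappa> + \<kappa>/4 * (norm p)\<^sup>2) \<le> regularized_affine_sup I c v \<kappa> p"
proof -
  have "norm (v i0) * norm p \<le> (\<kappa>/2)/2 * (norm p)\<^sup>2 + (norm (v i0))\<^sup>2 / (2 * (\<kappa>/2))"
    using kappa by (intro mult_le_half_square) auto
  moreover have "- (p \<bullet> v i0) \<le> norm (v i0) * norm p"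
    using norm_cauchy_schwarz[of "- p" "v i0"] by (simp add: mult.commute)
  ultimately have "c i0 - (norm (v i0))\<^sup>2 / \<kappa> + \<kappa>/4 * (norm p)\<^sup>2 \<le> c i0 + p \<bullet> v i0 + \<kappa>/2 * (norm p)\<^sup>2"
    by simp
  also have "ereal \<dots> \<le> regularized_affine_sup I c v \<kappa> p"
    by (rule regularized_affine_sup_lower[OF i0])
  finally show ?thesis by simp
qed

text \<open>Sequential lower semicontinuity, inherited from the continuity of each piece.\<close>
lemma regularized_affine_sup_limit_le:
  assumes lim: "p \<longlonglongrightarrow> l" and le: "\<And>k. regularized_affine_sup I c v \<kappa> (p k) \<le> ereal (b k)"
    and b: "b \<longlonglongrightarrow> r"
  shows "regularized_affine_sup I c v \<kappa> l \<le> ereal r"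
  unfolding regularized_affine_sup_le_iff
proof
  fix i assume i: "i \<in> I"
  have "(\<lambda>k. c i + p k \<bullet> v i + \<kappa>/2 * (norm (p k))\<^sup>2) \<longlonglongrightarrow> c i + l \<bullet> v i + \<kappa>/2 * (norm l)\<^sup>2"
    using lim by (intro tendsto_intros)
  moreover have "c i + p k \<bullet> v i + \<kappa>/2 * (norm (p k))\<^sup>2 \<le> b k" for k
    using le[of k] i unfolding regularized_affine_sup_le_iff by blast
  ultimately show "c i + l \<bullet> v i + \<kappa>/2 * (norm l)\<^sup>2 \<le> r"
    using b by (auto intro: LIMSEQ_le)
qed

text \<open>Existence of a minimizer: a minimizing sequence is bounded by coercivity, so by
  compactness a subsequence converges, and its limit is a minimizer by lower semicontinuity.\<close>
lemma regularized_affine_sup_has_minimizer: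
  fixes c :: "'i \<Rightarrow> real" and v :: "'i \<Rightarrow> 'a::euclidean_space"
  assumes i0: "i0 \<in> I" and kappa: "\<kappa> > 0"
    and fin: "regularized_affine_sup I c v \<kappa> p0 \<noteq> \<infinity>"
  shows "\<exists>p. is_minimizer (regularized_affine_sup I c v \<kappa>) p"
proof -
  let ?h = "regularized_affine_sup I c v \<kappa>"
  define C where "C = c i0 - (norm (v i0))\<^sup>2 / \<kappa>"
  have coercive: "ereal (C + \<kappa>/4 * (norm p)\<^sup>2) \<le> ?h p" for p
    unfolding C_def by (rule regularized_affine_sup_coercive[OF i0 kappa])
  define m where "m = (INF p. ?h p)"
  have "m \<le> ?h p0" unfolding m_def by (rule INF_lower) simp
  moreover have "ereal C \<le> m"
    unfolding m_def
  proof (rule INF_greatest)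
    fix p :: 'a
    have "ereal C \<le> ereal (C + \<kappa>/4 * (norm p)\<^sup>2)" using kappa by simp
    then show "ereal C \<le> ?h p" using coercive[of p] by (rule order_trans)
  qed
  ultimately obtain mr where mr: "m = ereal mr" using fin by (cases m) auto
  define b where "b k = mr + 1 / (real k + 1)" for k
  have "\<exists>p. ?h p \<le> ereal (b k)" for k
  proof -
    have "m < ereal (b k)" using mr by (simp add: b_def)
    then show ?thesis unfolding m_def INF_less_iff by (blast intro: less_imp_le)
  qed
  then obtain p where p: "\<And>k. ?h (p k) \<le> ereal (b k)" by metis
  have "b \<longlonglongrightarrow> mr + 0"
    unfolding b_def using LIMSEQ_inverse_real_of_nat
    by (intro tendsto_intros) (simp add: divide_inverse add.commute)
  then have b: "b \<longlonglongrightarrow> mr" by simp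
  have "(norm (p k))\<^sup>2 \<le> 4 * (mr + 1 - C) / \<kappa>" for k
  proof -
    have "ereal (C + \<kappa>/4 * (norm (p k))\<^sup>2) \<le> ereal (b k)" using coercive p by (rule order_trans)
    moreover have "b k \<le> mr + 1" by (simp add: b_def)
    ultimately have "\<kappa>/4 * (norm (p k))\<^sup>2 \<le> mr + 1 - C" by simp
    with kappa show ?thesis by (simp add: field_simps)
  qed
  then have "norm (p k) \<le> sqrt (4 * (mr + 1 - C) / \<kappa>)" for k by (rule real_le_rsqrt)
  then have "bounded (range p)" unfolding bounded_iff by blast
  then obtain l \<sigma> where \<sigma>: "strict_mono \<sigma>" and lim: "(p \<circ> \<sigma>) \<longlonglongrightarrow> l"
    using bounded_imp_convergent_subsequence by blast
  have "?h l \<le> ereal mr"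
    using lim _ LIMSEQ_subseq_LIMSEQ[OF b \<sigma>] by (rule regularized_affine_sup_limit_le) (simp add: p)
  moreover have "ereal mr \<le> ?h q" for q unfolding mr[symmetric] m_def by (rule INF_lower) simp
  ultimately have "is_minimizer ?h l" unfolding is_minimizer_def by (blast intro: order_trans)
  then show ?thesis by blast
qed

text \<open>Uniqueness: two distinct minimizers would make the midpoint strictly better.\<close>
lemma regularized_affine_sup_unique_minimizer:
  fixes c :: "'i \<Rightarrow> real" and v :: "'i \<Rightarrow> 'a::euclidean_space"
  assumes I: "I \<noteq> {}" and kappa: "\<kappa> > 0"
    and fin: "regularized_affine_sup I c v \<kappa> p0 \<noteq> \<infinity>"
  shows "\<exists>!p. is_minimizer (regularized_affine_sup I c v \<kappa>) p"
proof -
  let ?h = "regularized_affine_sup I c v \<kappa>"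
  obtain i0 where i0: "i0 \<in> I" using I by blast
  have "p = q" if p: "is_minimizer ?h p" and q: "is_minimizer ?h q" for p q
  proof (rule ccontr)
    assume "p \<noteq> q"
    then have gap: "0 < \<kappa>/8 * (norm (p - q))\<^sup>2" using kappa by simp
    have "?h p \<le> ?h p0" using p unfolding is_minimizer_def by blast
    then have "?h p \<noteq> \<infinity>" using fin by auto
    moreover have "?h p \<noteq> -\<infinity>" using regularized_affine_sup_lower[OF i0, of c p v \<kappa>] by auto
    ultimately obtain r where r: "?h p = ereal r" by (cases "?h p") auto
    have "?h q \<le> ereal r" using q r unfolding is_minimizer_def by metis
    then have "?h (midpoint p q) \<le> ereal (r - \<kappa>/8 * (norm (p - q))\<^sup>2)"
      using regularized_affine_sup_midpoint r by (metis order_refl)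
    also have "\<dots> < ?h p" using r gap by simp
    finally show False using p unfolding is_minimizer_def by (metis not_le)
  qed
  then show ?thesis using regularized_affine_sup_has_minimizer[OF i0 kappa fin] by blast
qed

text \<open>For a proper function \<open>f\<close>, points outside the effective domain contribute \<open>-\<infinity>\<close>
  to a conjugate-type supremum, so it can be taken over \<open>edom f\<close> with real values.\<close>
lemma SUP_minus_proper:
  fixes f :: "'a \<Rightarrow> ereal"
  assumes nm: "\<And>x. f x \<noteq> -\<infinity>"
  shows "(SUP x. ereal (a x) - f x) = (SUP x\<in>edom f. ereal (a x - real_of_ereal (f x)))"
proof (rule antisym)
  show "(SUP x. ereal (a x) - f x) \<le> (SUP x\<in>edom f. ereal (a x - real_of_ereal (f x)))"
  proof (rule SUP_least)
    fix x show "ereal (a x) - f x \<le> (SUP x\<in>edom f. ereal (a x - real_of_ereal (f x)))"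
    proof (cases "x \<in> edom f")
      case True
      then have "ereal (a x) - f x = ereal (a x - real_of_ereal (f x))"
        using nm[of x] by (cases "f x") (auto simp: edom_def)
      with True show ?thesis by (auto intro: SUP_upper2)
    qed (auto simp: edom_def)
  qed
  show "(SUP x\<in>edom f. ereal (a x - real_of_ereal (f x))) \<le> (SUP x. ereal (a x) - f x)"
  proof (rule SUP_subset_mono)
    fix x assume "x \<in> edom f"
    then show "ereal (a x - real_of_ereal (f x)) \<le> ereal (a x) - f x"
      using nm[of x] by (cases "f x") (auto simp: edom_def)
  qed simp
qed

lemma SUP_add_SUP_product:
  assumes X: "X \<noteq> {}" and Y: "Y \<noteq> {}"
  shows "(SUP x\<in>X. ereal (a x)) + (SUP y\<in>Y. ereal (b y))
       = (SUP z\<in>X \<times> Y. ereal (a (fst z) + b (snd z)))"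
proof -
  have "(SUP y\<in>Y. ereal (b y)) \<noteq> -\<infinity>"
    using Y SUP_upper[of _ Y "\<lambda>y. ereal (b y)"] by (metis MInfty_neq_ereal(1) all_not_in_conv ereal_infty_less_eq(2))
  then have "(SUP x\<in>X. ereal (a x)) + (SUP y\<in>Y. ereal (b y))
      = (SUP x\<in>X. ereal (a x) + (SUP y\<in>Y. ereal (b y)))"
    by (rule SUP_ereal_add_left[symmetric, OF X])
  also have "\<dots> = (SUP x\<in>X. SUP y\<in>Y. ereal (a x + b y))"
    using Y by (simp add: SUP_ereal_add_right[symmetric])
  also have "\<dots> = (SUP z\<in>X \<times> Y. ereal (a (fst z) + b (snd z)))"
    by (rule antisym) (auto intro!: SUP_least SUP_upper2)
  finally show ?thesis .
qed

text \<open>The pieces of the dual objective: for a primal--auxiliary pair \<open>z = (x, y)\<close> in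
  \<open>dom f \<times> dom g\<close>, the function \<open>p \<mapsto> \<langle>p, A x - y\<rangle> - f x - \<rho>/2 \<parallel>x\<parallel>\<^sup>2 - g y\<close> is affine.\<close>
definition dual_offset :: "real \<Rightarrow> ('a::real_normed_vector \<Rightarrow> ereal) \<Rightarrow> ('b \<Rightarrow> ereal) \<Rightarrow> 'a \<times> 'b \<Rightarrow> real" where
  "dual_offset \<rho> f g z =
     - real_of_ereal (f (fst z)) - \<rho>/2 * (norm (fst z))\<^sup>2 - real_of_ereal (g (snd z))"

definition dual_slope :: "('a \<Rightarrow> 'b::ab_group_add) \<Rightarrow> 'a \<times> 'b \<Rightarrow> 'b" where
  "dual_slope A z = A (fst z) - snd z"

lemma theta_rho_eq_affine_sup:
  fixes f :: "'a::real_inner \<Rightarrow> ereal" and g :: "'b::real_inner \<Rightarrow> ereal"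
  assumes f: "proper_fun f" and g: "proper_fun g"
  shows "theta_rho \<rho> f g A p
    = (SUP z\<in>edom f \<times> edom g. ereal (dual_offset \<rho> f g z + p \<bullet> dual_slope A z))"
proof -
  have fnm: "\<And>x. f x \<noteq> -\<infinity>" and gnm: "\<And>y. g y \<noteq> -\<infinity>"
    using f g unfolding proper_fun_def by blast+
  have ne: "edom f \<noteq> {}" "edom g \<noteq> {}"
    using f g unfolding proper_fun_def edom_def by (auto simp: less_top)
  have "(\<lambda>x. ereal (p \<bullet> A x) - f x - ereal (\<rho>/2 * (norm x)\<^sup>2))
      = (\<lambda>x. ereal (p \<bullet> A x - \<rho>/2 * (norm x)\<^sup>2) - f x)"
  proof
    fix x show "ereal (p \<bullet> A x) - f x - ereal (\<rho>/2 * (norm x)\<^sup>2)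
        = ereal (p \<bullet> A x - \<rho>/2 * (norm x)\<^sup>2) - f x"
      using fnm[of x] by (cases "f x") auto
  qed
  then have "theta_rho \<rho> f g A p
      = (SUP x\<in>edom f. ereal (p \<bullet> A x - \<rho>/2 * (norm x)\<^sup>2 - real_of_ereal (f x)))
        + (SUP y\<in>edom g. ereal ((- p) \<bullet> y - real_of_ereal (g y)))"
    unfolding theta_rho_def fconj_def by (simp only: SUP_minus_proper[of f, OF fnm] SUP_minus_proper[of g, OF gnm])
  also have "\<dots> = (SUP z\<in>edom f \<times> edom g. ereal (dual_offset \<rho> f g z + p \<bullet> dual_slope A z))"
    unfolding SUP_add_SUP_product[OF ne]
    by (intro SUP_cong) (auto simp: dual_offset_def dual_slope_def inner_diff_right)
  finally show ?thesis .
qed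

lemma theta_rho_kappa_eq_regularized_affine_sup:
  fixes f :: "'a::real_inner \<Rightarrow> ereal" and g :: "'b::real_inner \<Rightarrow> ereal"
  assumes "proper_fun f" and "proper_fun g"
  shows "theta_rho_kappa \<rho> \<kappa> f g A
    = regularized_affine_sup (edom f \<times> edom g) (dual_offset \<rho> f g) (dual_slope A) \<kappa>"
  by (intro ext) (simp add: theta_rho_kappa_def regularized_affine_sup_def
      theta_rho_eq_affine_sup[OF assms])

lemma theta_eq_theta_rho_0: "theta f g A = theta_rho 0 f g A"
  by (intro ext) (simp add: theta_def theta_rho_def)

lemma Dconst_upper:
  assumes bnd: "bounded (edom f)" and x: "x \<in> edom f"
  shows "(norm x)\<^sup>2 / 2 \<le> Dconst f"
  unfolding Dconst_def
proof (rule cSUP_upper[OF x])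
  obtain B where "\<And>x. x \<in> edom f \<Longrightarrow> norm x \<le> B" using bnd unfolding bounded_iff by blast
  then have "\<And>x. x \<in> edom f \<Longrightarrow> (norm x)\<^sup>2 / 2 \<le> B\<^sup>2 / 2"
    by (simp add: power_mono)
  then show "bdd_above ((\<lambda>x. (norm x)\<^sup>2 / 2) ` edom f)" by (intro bdd_aboveI2)
qed

lemma theta_rho_sandwich:
  fixes f :: "'a::real_inner \<Rightarrow> ereal" and g :: "'b::real_inner \<Rightarrow> ereal"
  assumes f: "proper_fun f" and g: "proper_fun g" and bnd: "bounded (edom f)" and rho: "0 \<le> \<rho>"
  shows "theta_rho \<rho> f g A p \<le> theta f g A p"
    and "theta f g A p \<le> theta_rho \<rho> f g A p + ereal (\<rho> * Dconst f)"
proof -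
  let ?Z = "edom f \<times> edom g"
  have ne: "?Z \<noteq> {}"
    using f g unfolding proper_fun_def edom_def by (auto simp: less_top)
  have offset: "dual_offset 0 f g z = dual_offset \<rho> f g z + \<rho> * ((norm (fst z))\<^sup>2 / 2)" for z
    by (simp add: dual_offset_def)
  have theta: "theta f g A p = (SUP z\<in>?Z. ereal (dual_offset 0 f g z + p \<bullet> dual_slope A z))"
    unfolding theta_eq_theta_rho_0 by (rule theta_rho_eq_affine_sup[OF f g])
  show "theta_rho \<rho> f g A p \<le> theta f g A p"
    unfolding theta theta_rho_eq_affine_sup[OF f g] offset
    using rho by (intro SUP_mono') simp
  have "theta f g A p \<le> (SUP z\<in>?Z. ereal (dual_offset \<rho> f g z + p \<bullet> dual_slope A z) + ereal (\<rho> * Dconst f))"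
    unfolding theta offset
  proof (rule SUP_mono)
    fix z assume "z \<in> ?Z"
    then have "\<rho> * ((norm (fst z))\<^sup>2 / 2) \<le> \<rho> * Dconst f"
      using Dconst_upper[OF bnd, of "fst z"] rho by (intro mult_left_mono) auto
    then show "\<exists>z'\<in>?Z. ereal (dual_offset \<rho> f g z + \<rho> * ((norm (fst z))\<^sup>2 / 2) + p \<bullet> dual_slope A z)
        \<le> ereal (dual_offset \<rho> f g z' + p \<bullet> dual_slope A z') + ereal (\<rho> * Dconst f)"
      using \<open>z \<in> ?Z\<close> by (intro bexI[of _ z]) auto
  qed
  also have "\<dots> = theta_rho \<rho> f g A p + ereal (\<rho> * Dconst f)"
    unfolding theta_rho_eq_affine_sup[OF f g] by (rule SUP_ereal_add_left[OF ne]) simp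
  finally show "theta f g A p \<le> theta_rho \<rho> f g A p + ereal (\<rho> * Dconst f)" .
qed

lemma theta_rho_neq_minf:
  fixes f :: "'a::real_inner \<Rightarrow> ereal" and g :: "'b::real_inner \<Rightarrow> ereal"
  assumes f: "proper_fun f" and g: "proper_fun g"
  shows "theta_rho \<rho> f g A p \<noteq> -\<infinity>"
proof -
  obtain z where z: "z \<in> edom f \<times> edom g"
    using f g unfolding proper_fun_def edom_def by (auto simp: less_top)
  have "ereal (dual_offset \<rho> f g z + p \<bullet> dual_slope A z) \<le> theta_rho \<rho> f g A p"
    unfolding theta_rho_eq_affine_sup[OF f g] using z by (rule SUP_upper)
  then show ?thesis by auto
qed

text \<open>If \<open>f\<close> and \<open>g\<close> are bounded below, \<open>\<theta>\<^sub>\<rho>(0) = -inf f\<^sub>\<rho> - inf g\<close> is finite.\<close>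
lemma theta_rho_0_finite:
  fixes f :: "'a::real_inner \<Rightarrow> ereal" and g :: "'b::real_inner \<Rightarrow> ereal"
  assumes f: "proper_fun f" and g: "proper_fun g" and rho: "0 \<le> \<rho>"
    and bf: "\<And>x. ereal bf \<le> f x" and bg: "\<And>y. ereal bg \<le> g y"
  shows "theta_rho \<rho> f g A 0 \<noteq> \<infinity>"
proof -
  have "theta_rho \<rho> f g A 0 \<le> ereal (- bf - bg)"
    unfolding theta_rho_eq_affine_sup[OF f g]
  proof (rule SUP_least)
    fix z assume "z \<in> edom f \<times> edom g"
    then have "bf \<le> real_of_ereal (f (fst z))" "bg \<le> real_of_ereal (g (snd z))"
      using bf[of "fst z"] bg[of "snd z"] unfolding edom_def
      by (cases "f (fst z)"; cases "g (snd z)"; auto)+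
    moreover have "0 \<le> \<rho>/2 * (norm (fst z))\<^sup>2" using rho by simp
    ultimately show "ereal (dual_offset \<rho> f g z + 0 \<bullet> dual_slope A z) \<le> ereal (- bf - bg)"
      unfolding dual_offset_def by simp
  qed
  then show ?thesis by auto
qed

text \<open>The comparison argument behind the main estimate, for an abstract objective \<open>T\<close> and a
  smoothed version \<open>T\<^sub>\<rho>\<close> with \<open>T\<^sub>\<rho> \<le> T \<le> T\<^sub>\<rho> + \<delta>\<close>: if \<open>p\<^sub>D\<^sub>S\<close> minimizes \<open>T\<^sub>\<rho> + \<kappa>/2 \<parallel>\<cdot>\<parallel>\<^sup>2\<close> and
  \<open>p\<^sup>*\<close> minimizes \<open>T\<close>, then \<open>\<kappa>/2 \<parallel>p\<^sub>D\<^sub>S\<parallel>\<^sup>2 + T\<^sub>\<rho>(p\<^sub>D\<^sub>S) \<le> \<kappa>/2 \<parallel>p\<^sup>*\<parallel>\<^sup>2 + T(p\<^sup>*) \<le> \<kappa>/2 \<parallel>p\<^sup>*\<parallel>\<^sup>2 + T\<^sub>\<rho>(p\<^sub>D\<^sub>S) + \<delta>\<close>.\<close>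
lemma regularized_minimizer_norm_bound:
  fixes T Tr :: "'a::real_normed_vector \<Rightarrow> ereal"
  assumes below: "\<And>p. Tr p \<le> T p" and above: "\<And>p. T p \<le> Tr p + ereal \<delta>"
    and nm: "\<And>p. Tr p \<noteq> -\<infinity>" and fin: "Tr q \<noteq> \<infinity>" and kappa: "\<kappa> > 0"
    and pDS: "is_minimizer (\<lambda>p. Tr p + ereal (\<kappa>/2 * (norm p)\<^sup>2)) pDS"
    and ps: "is_minimizer T ps"
  shows "(norm pDS)\<^sup>2 \<le> (norm ps)\<^sup>2 + 2 * \<delta> / \<kappa>"
proof -
  have "Tr pDS + ereal (\<kappa>/2 * (norm pDS)\<^sup>2) \<le> Tr q + ereal (\<kappa>/2 * (norm q)\<^sup>2)"
    using pDS unfolding is_minimizer_def by blast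
  then obtain t where t: "Tr pDS = ereal t"
    using fin nm[of pDS] by (cases "Tr pDS"; cases "Tr q") auto
  have "ereal t + ereal (\<kappa>/2 * (norm pDS)\<^sup>2) \<le> Tr ps + ereal (\<kappa>/2 * (norm ps)\<^sup>2)"
    using pDS t unfolding is_minimizer_def by metis
  also have "\<dots> \<le> T pDS + ereal (\<kappa>/2 * (norm ps)\<^sup>2)"
    using below[of ps] ps unfolding is_minimizer_def by (metis add_right_mono order_trans)
  also have "\<dots> \<le> (ereal t + ereal \<delta>) + ereal (\<kappa>/2 * (norm ps)\<^sup>2)"
    using above[of pDS] t by (intro add_right_mono) simp
  finally have "\<kappa>/2 * (norm pDS)\<^sup>2 \<le> \<kappa>/2 * (norm ps)\<^sup>2 + \<delta>" by simp
  with kappa show ?thesis by (simp add: field_simps)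
qed

text \<open>The parameter choice \<open>\<rho> = \<epsilon>/(3 D\<^sub>f)\<close>, \<open>\<kappa> = 2\<epsilon>/(3 R\<^sup>2)\<close> makes \<open>2\<rho> D\<^sub>f/\<kappa> = R\<^sup>2\<close>.\<close>
lemma norm_bound_for_parameter_choice:
  fixes pDS ps :: "'a::real_normed_vector"
  assumes bound: "(norm pDS)\<^sup>2 \<le> (norm ps)\<^sup>2 + 2 * \<rho> / \<kappa> * D"
    and R: "R > 0" "norm ps \<le> R" and D: "D > 0" and eps: "\<epsilon> > 0"
    and rho: "\<rho> = \<epsilon> / (3 * D)" and kappa: "\<kappa> = 2 * \<epsilon> / (3 * R\<^sup>2)"
  shows "norm pDS \<le> sqrt 2 * R"
proof -
  have "2 * \<rho> / \<kappa> * D = R\<^sup>2" unfolding rho kappa using D eps R(1) by (simp add: divide_simps)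
  then have "(norm pDS)\<^sup>2 \<le> (norm ps)\<^sup>2 + R\<^sup>2" using bound by simp
  moreover have "(norm ps)\<^sup>2 \<le> R\<^sup>2" using R by (intro power_mono) auto
  ultimately have "(norm pDS)\<^sup>2 \<le> 2 * R\<^sup>2" by linarith
  also have "\<dots> = (sqrt 2 * R)\<^sup>2" by (simp add: power_mult_distrib)
  finally have "(norm pDS)\<^sup>2 \<le> (sqrt 2 * R)\<^sup>2" .
  then show ?thesis by (rule power2_le_imp_le) (use R(1) in simp)
qed

text \<open>The main theorem: \<open>f\<close> and \<open>g\<close> are bounded below, so \<open>\<theta>\<^sub>\<rho>\<^sub>,\<^sub>\<kappa>\<close> is a regularized supremum of
  affine functions that is finite at \<open>0\<close> and has a unique minimizer; the norm estimate is the
  comparison argument for the sandwich \<open>\<theta>\<^sub>\<rho> \<le> \<theta> \<le> \<theta>\<^sub>\<rho> + \<rho> D\<^sub>f\<close>.\<close>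
theorem mainTheorem4:
  fixes f :: "'h::{real_inner, complete_space} \<Rightarrow> ereal"
    and g :: "real^'m \<Rightarrow> ereal"
    and A :: "'h \<Rightarrow> real^'m"
    and \<mu> \<rho> \<kappa> :: real
  assumes f_proper: "proper_fun f" and f_convex: "convex_efun f" and f_lsc: "lsc_efun f"
    and f_bdd: "bounded (edom f)"
    and g_proper: "proper_fun g" and g_lsc: "lsc_efun g"
    and mu_pos: "\<mu> > 0" and g_sc: "strongly_convex_efun \<mu> g"
    and A_lin: "bounded_linear A"
    and feas: "A ` edom f \<inter> edom g \<noteq> {}"
    and rho_pos: "\<rho> > 0" and kappa_pos: "\<kappa> > 0"
  shows "(\<exists>!p. is_minimizer (theta_rho_kappa \<rho> \<kappa> f g A) p) \<and>
    (\<forall>pDS. is_minimizer (theta_rho_kappa \<rho> \<kappa> f g A) pDS \<longrightarrow>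
       (\<forall>ps. is_minimizer (theta f g A) ps \<longrightarrow>
          (norm pDS)\<^sup>2 \<le> (norm ps)\<^sup>2 + 2 * \<rho> / \<kappa> * Dconst f) \<and>
       (\<forall>ps R \<epsilon>. is_minimizer (theta f g A) ps \<longrightarrow> R > 0 \<longrightarrow> norm ps \<le> R \<longrightarrow>
          Dconst f > 0 \<longrightarrow> \<epsilon> > 0 \<longrightarrow> \<rho> = \<epsilon> / (3 * Dconst f) \<longrightarrow>
          \<kappa> = 2 * \<epsilon> / (3 * R\<^sup>2) \<longrightarrow> norm pDS \<le> sqrt 2 * R))"
proof -
  obtain bf where bf: "\<And>x. ereal bf \<le> f x"
    using convex_lsc_bdd_below[OF f_proper f_convex f_lsc f_bdd] by blast
  obtain bg where bg: "\<And>y. ereal bg \<le> g y"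
    using strongly_convex_bdd_below[OF g_proper g_lsc mu_pos g_sc] by blast
  have fin0: "theta_rho \<rho> f g A 0 \<noteq> \<infinity>"
    using theta_rho_0_finite[OF f_proper g_proper less_imp_le[OF rho_pos] bf bg] .
  have dom: "edom f \<times> edom g \<noteq> {}"
    using f_proper g_proper unfolding proper_fun_def edom_def by (auto simp: less_top)
  have objective: "theta_rho_kappa \<rho> \<kappa> f g A = (\<lambda>p. theta_rho \<rho> f g A p + ereal (\<kappa>/2 * (norm p)\<^sup>2))"
    by (simp add: fun_eq_iff theta_rho_kappa_def)
  have "theta_rho_kappa \<rho> \<kappa> f g A 0 \<noteq> \<infinity>" using fin0 by (simp add: objective)
  then have unique: "\<exists>!p. is_minimizer (theta_rho_kappa \<rho> \<kappa> f g A) p"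
    unfolding theta_rho_kappa_eq_regularized_affine_sup[OF f_proper g_proper]
    by (rule regularized_affine_sup_unique_minimizer[OF dom kappa_pos])
  have bound: "(norm pDS)\<^sup>2 \<le> (norm ps)\<^sup>2 + 2 * \<rho> / \<kappa> * Dconst f"
    if pDS: "is_minimizer (theta_rho_kappa \<rho> \<kappa> f g A) pDS"
      and ps: "is_minimizer (theta f g A) ps" for pDS ps
  proof -
    have "(norm pDS)\<^sup>2 \<le> (norm ps)\<^sup>2 + 2 * (\<rho> * Dconst f) / \<kappa>"
      using pDS[unfolded objective] ps
      by (rule regularized_minimizer_norm_bound[where Tr = "theta_rho \<rho> f g A" and T = "theta f g A",
          OF theta_rho_sandwich[OF f_proper g_proper f_bdd less_imp_le[OF rho_pos]]
          theta_rho_neq_minf[OF f_proper g_proper] fin0 kappa_pos])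
    then show ?thesis by (simp add: mult.commute mult.left_commute)
  qed
  show ?thesis
    using unique bound norm_bound_for_parameter_choice[OF bound] by (intro conjI allI impI) auto
qed

end
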